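(* Consider $n$ agents over a fixed directed graph with nonnegative weights $a_{ij}$ ($a_{ij}>0$ iff $j\in N_i$) that has a spanning tree, with Laplacian $L$ whose eigenvalues are $\lambda_1(L)=0$ (simple) and $\lambda_2(L),\dots,\lambda_n(L)$ (positive real parts). Let $0<h<\min_{2\le i\le n}\frac{2\,\mathrm{Re}(\lambda_i(L))}{|\lambda_i(L)|^2}$. The states $x_i(t)\in\mathbb{R}^m$ evolve by $x_i(t+1)=x_i(t)+u_i(t)$ with $$y_i(t)=x_i(t)+h\sum_{j\in N_i}a_{ij}(x_j(t)-x_i(t)),\ \nabla_i(t)=\beta(t)\nabla g_i^+(y_i(t)),\ \xi_i(t)=y_i(t)-\nabla_i(t),$$ $$\varphi_i(t)=\alpha(t)\big(\xi_i(t)-P_{X_i}(\xi_i(t))\big),\ \phi_i(t)=-\nabla_i(t)-\varphi_i(t),\ u_i(t)=h\sum_{j\in N_i}a_{ij}(x_j(t)-x_i(t))+\phi_i(t),$$ for given real sequences $\alpha(t),\beta(t)$. If $\lim_{t\to\infty}\phi_i(t)=0$ for every $i$, then the agents reach consensus asymptotically, i.e. $\lim_{t\to\infty}\|x_i(t)-x_j(t)\|=0$ for all $i,j$.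
   Context: $g_i:\mathbb{R}^m\to\mathbb{R}$ convex continuous, $X_i\subset\mathbb{R}^m$ closed convex, $g_i^+=\max[g_i,0]$, $\nabla g_i^+(y)$ a subgradient of $g_i^+$ at $y$, $P_{X_i}$ Euclidean projection onto $X_i$. Laplacian $L=(l_{ij})$: $l_{ij}=-a_{ij}$ for $i\neq j$, $l_{ii}=\sum_j a_{ij}$. A spanning tree is a subset of edges forming a directed tree that connects all nodes. *)

theory Defs
  imports "HOL-Analysis.Analysis"
begin

text \<open>Agents are indexed by a finite type 'n; a i j is the weight a_ij
 (agent i receives information from agent j, i.e. directed edge j -> i).\<close>

definition neighbors :: "('n \<Rightarrow> 'n \<Rightarrow> real) \<Rightarrow> 'n \<Rightarrow> 'n set" where
  "neighbors a i = {j. a i j > 0}"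

definition graph_edges :: "('n \<Rightarrow> 'n \<Rightarrow> real) \<Rightarrow> ('n \<times> 'n) set" where
  "graph_edges a = {(j, i). a i j > 0}"

definition has_spanning_tree :: "('n \<Rightarrow> 'n \<Rightarrow> real) \<Rightarrow> bool" where
  "has_spanning_tree a \<longleftrightarrow> (\<exists>T r. T \<subseteq> graph_edges a \<and>
      (\<forall>j. (j, r) \<notin> T) \<and>
      (\<forall>i. i \<noteq> r \<longrightarrow> (\<exists>!j. (j, i) \<in> T)) \<and>
      (\<forall>i. (r, i) \<in> T\<^sup>*))"

definition laplacian :: "('n::finite \<Rightarrow> 'n \<Rightarrow> real) \<Rightarrow> real^'n^'n" where
  "laplacian a = (\<chi> i j. if i = j then (\<Sum>k\<in>UNIV. a i k) else - a i j)"

definition cmat_eigenvalue :: "real^'n^'n \<Rightarrow> complex \<Rightarrow> bool" where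
  "cmat_eigenvalue A c \<longleftrightarrow>
     (\<exists>v::complex^'n. v \<noteq> 0 \<and> (\<chi> i j. complex_of_real (A $ i $ j)) *v v = c *s v)"

definition gplus :: "('a \<Rightarrow> real) \<Rightarrow> 'a \<Rightarrow> real" where
  "gplus g y = max (g y) 0"

definition is_subgradient :: "('a::real_inner \<Rightarrow> real) \<Rightarrow> 'a \<Rightarrow> 'a \<Rightarrow> bool" where
  "is_subgradient f y d \<longleftrightarrow> (\<forall>z. f z \<ge> f y + d \<bullet> (z - y))"

end

theory Submission
  imports Defs "Jordan_Normal_Form.Spectral_Radius"
begin

text \<open>Fix a root r of the spanning tree. The disagreements e_i = x_i - x_r obey the linear
recursion e(t+1) = N e(t) + (\<phi>_i(t) - \<phi>_r(t)) with N = (I - 1 e_r^T)(I - h L). An eigenvector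
of N is either constant (eigenvalue 0) or, after subtracting a constant, an eigenvector of L
for \<lambda> = (1 - \<mu>)/h; the eigenvalue \<mu> = 1 is excluded because a vector with constant
Laplacian image is constant on a graph with a spanning tree. The bound on h then gives
|1 - h \<lambda>| < 1, so N has spectral radius below 1, its powers decay geometrically, and the
recursion driven by a vanishing input tends to zero.\<close>

(* JNF's index syntax "$" would clash with vec_nth on the Cartesian vectors of the statement. *)
no_notation vec_index (infixl "$" 100)

lemma smult_smult_mat: "a \<cdot>\<^sub>m (b \<cdot>\<^sub>m A) = (a * b) \<cdot>\<^sub>m (A :: 'a::comm_ring_1 mat)"
  by (rule eq_matI) (auto simp: mult.assoc)

lemma one_smult_mat: "(1 :: 'a::comm_ring_1) \<cdot>\<^sub>m A = A"
  by (rule eq_matI) auto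

lemma smult_pow_mat:
  assumes A: "(A :: 'a::comm_ring_1 mat) \<in> carrier_mat n n"
  shows "(a \<cdot>\<^sub>m A) ^\<^sub>m k = a ^ k \<cdot>\<^sub>m A ^\<^sub>m k"
proof (induction k)
  case 0
  then show ?case using A by (simp add: one_smult_mat)
next
  case (Suc k)
  have "(a \<cdot>\<^sub>m A) ^\<^sub>m Suc k = (a ^ k \<cdot>\<^sub>m A ^\<^sub>m k) * (a \<cdot>\<^sub>m A)"
    using Suc by simp
  also have "\<dots> = a ^ k \<cdot>\<^sub>m (A ^\<^sub>m k * (a \<cdot>\<^sub>m A))"
    using A by (simp add: mult_smult_assoc_mat[where nr=n and n=n and nc=n] pow_carrier_mat)
  also have "\<dots> = a ^ k \<cdot>\<^sub>m (a \<cdot>\<^sub>m (A ^\<^sub>m k * A))"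
    using A by (simp add: mult_smult_distrib[where nr=n and n=n and nc=n] pow_carrier_mat)
  also have "\<dots> = a ^ Suc k \<cdot>\<^sub>m A ^\<^sub>m Suc k"
    by (simp add: smult_smult_mat mult.commute)
  finally show ?case .
qed

lemma smult_mat_mult_vec:
  assumes "(A :: 'a::comm_ring_1 mat) \<in> carrier_mat n n" "v \<in> carrier_vec n"
  shows "(a \<cdot>\<^sub>m A) *\<^sub>v v = a \<cdot>\<^sub>v (A *\<^sub>v v)"
  using assms by (intro eq_vecI) (auto simp: scalar_prod_def sum_distrib_left mult.assoc)

lemma spectrum_smult_mat:
  assumes B: "(B :: complex mat) \<in> carrier_mat n n" and \<nu>: "\<nu> \<in> spectrum B"
  shows "c * \<nu> \<in> spectrum (c \<cdot>\<^sub>m B)"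
proof -
  from \<nu> obtain v where v: "v \<in> carrier_vec n" "v \<noteq> 0\<^sub>v n" "B *\<^sub>v v = \<nu> \<cdot>\<^sub>v v"
    using B unfolding spectrum_def eigenvalue_def eigenvector_def by auto
  have "(c \<cdot>\<^sub>m B) *\<^sub>v v = (c * \<nu>) \<cdot>\<^sub>v v"
    using smult_mat_mult_vec[OF B v(1)] v(3) by (simp add: smult_smult_assoc)
  then show ?thesis
    using v B unfolding spectrum_def eigenvalue_def eigenvector_def by auto
qed

lemma spectral_radius_less_1_power_decay:
  assumes A: "(A :: complex mat) \<in> carrier_mat n n" and n: "n > 0"
    and sr: "spectral_radius A < 1"
  obtains c r where "0 \<le> c" "0 < r" "r < 1"
    "\<And>k i j. i < n \<Longrightarrow> j < n \<Longrightarrow> cmod ((A ^\<^sub>m k) $$ (i, j)) \<le> c * r ^ k"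
proof -
  define \<rho> where "\<rho> = spectral_radius A"
  have "\<rho> \<ge> 0"
    using spectral_radius_mem_max(1)[OF A n] by (auto simp: \<rho>_def)
  define r where "r = (1 + \<rho>) / 2"
  have r: "0 < r" "r < 1" "\<rho> < r"
    using \<open>\<rho> \<ge> 0\<close> sr by (auto simp: r_def \<rho>_def)
  define B where "B = complex_of_real (1 / r) \<cdot>\<^sub>m A"
  have B: "B \<in> carrier_mat n n"
    using A by (simp add: B_def)
  have A_eq: "A = complex_of_real r \<cdot>\<^sub>m B"
    using r by (simp add: B_def smult_smult_mat one_smult_mat flip: of_real_mult)
  \<comment> \<open>rescaling by the spectral gap turns bounded powers of B into geometric decay of powers of A\<close>
  have "spectral_radius B < 1"
  proof -
    obtain \<nu> where \<nu>: "\<nu> \<in> spectrum B" "spectral_radius B = cmod \<nu>"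
      using spectral_radius_mem_max(1)[OF B n] by auto
    have "cmod (complex_of_real r * \<nu>) \<le> \<rho>"
      using spectrum_smult_mat[OF B \<nu>(1)] spectral_radius_mem_max(2)[OF A n]
      by (auto simp: \<rho>_def A_eq)
    then have "r * cmod \<nu> \<le> \<rho>"
      using r by (simp add: norm_mult)
    then have "r * cmod \<nu> < r * 1"
      using r by linarith
    then show ?thesis
      using r \<nu>(2) mult_less_cancel_left_pos by metis
  qed
  then obtain c where c: "\<And>k. norm_bound (B ^\<^sub>m k) c"
    using spectral_radius_jnf_norm_bound_less_1_upper_triangular[OF B] by auto
  have "c \<ge> 0"
    using c[of 0] n B unfolding norm_bound_def
    by (auto elim!: allE[of _ 0] intro: order_trans[OF norm_ge_zero])
  moreover have "cmod ((A ^\<^sub>m k) $$ (i, j)) \<le> c * r ^ k" if "i < n" "j < n" for k i j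
  proof -
    have "(A ^\<^sub>m k) $$ (i, j) = complex_of_real r ^ k * (B ^\<^sub>m k) $$ (i, j)"
      unfolding A_eq smult_pow_mat[OF B] using that B pow_carrier_mat[OF B] by auto
    moreover have "cmod ((B ^\<^sub>m k) $$ (i, j)) \<le> c"
      using c[of k] that B unfolding norm_bound_def by auto
    ultimately show ?thesis
      using r by (simp add: norm_mult norm_power mult.commute mult_left_mono)
  qed
  ultimately show ?thesis
    using that r by blast
qed

definition vec_norm1 :: "complex Matrix.vec \<Rightarrow> real" where
  "vec_norm1 v = (\<Sum>i<dim_vec v. cmod (vec_index v i))"

lemma vec_norm1_nonneg: "vec_norm1 v \<ge> 0"
  unfolding vec_norm1_def by (intro sum_nonneg) auto

lemma vec_norm1_add_le:
  assumes "dim_vec w = dim_vec v"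
  shows "vec_norm1 (v + w) \<le> vec_norm1 v + vec_norm1 w"
proof -
  have "vec_norm1 (v + w) = (\<Sum>i<dim_vec v. cmod (vec_index v i + vec_index w i))"
    using assms by (simp add: vec_norm1_def)
  also have "\<dots> \<le> (\<Sum>i<dim_vec v. cmod (vec_index v i) + cmod (vec_index w i))"
    by (intro sum_mono norm_triangle_ineq)
  also have "\<dots> = vec_norm1 v + vec_norm1 w"
    using assms by (simp add: vec_norm1_def sum.distrib)
  finally show ?thesis .
qed

lemma vec_norm1_mult_mat_vec_le:
  assumes A: "(A :: complex mat) \<in> carrier_mat n n" and v: "v \<in> carrier_vec n"
    and b: "\<And>i j. i < n \<Longrightarrow> j < n \<Longrightarrow> cmod (A $$ (i, j)) \<le> b"
  shows "vec_norm1 (A *\<^sub>v v) \<le> real n * b * vec_norm1 v"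
proof -
  have row: "cmod (vec_index (A *\<^sub>v v) i) \<le> b * vec_norm1 v" if i: "i < n" for i
  proof -
    have "cmod (vec_index (A *\<^sub>v v) i) = cmod (\<Sum>j<n. A $$ (i, j) * vec_index v j)"
      using A v i by (simp add: scalar_prod_def atLeast0LessThan)
    also have "\<dots> \<le> (\<Sum>j<n. cmod (A $$ (i, j)) * cmod (vec_index v j))"
      by (simp add: norm_mult[symmetric] norm_sum)
    also have "\<dots> \<le> (\<Sum>j<n. b * cmod (vec_index v j))"
      using b i by (intro sum_mono mult_right_mono) auto
    finally show ?thesis
      using v by (simp add: vec_norm1_def sum_distrib_left)
  qed
  have "vec_norm1 (A *\<^sub>v v) = (\<Sum>i<n. cmod (vec_index (A *\<^sub>v v) i))"
    using A by (simp add: vec_norm1_def)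
  also have "\<dots> \<le> (\<Sum>i<n. b * vec_norm1 v)"
    by (rule sum_mono) (use row in simp)
  finally show ?thesis
    by simp
qed

lemma tendsto_zero_of_contraction_after_steps:
  fixes \<mu> g :: "nat \<Rightarrow> real"
  assumes nonneg: "\<And>t. \<mu> t \<ge> 0" and K: "K > 0"
    and step: "\<And>t. \<mu> (t + K) \<le> \<mu> t / 2 + g t" and g: "g \<longlonglongrightarrow> 0"
  shows "\<mu> \<longlonglongrightarrow> 0"
proof (rule LIMSEQ_I)
  fix \<epsilon> :: real
  assume "\<epsilon> > 0"
  then obtain T0 where T0: "\<And>t. t \<ge> T0 \<Longrightarrow> norm (g t) < \<epsilon> / 4"
    using LIMSEQ_D[OF g, of "\<epsilon> / 4"] by auto
  define B where "B = Max ((\<lambda>s. \<mu> (T0 + s)) ` {..<K})"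
  have B: "\<mu> (T0 + s) \<le> B" if "s < K" for s
    unfolding B_def using that by (intro Max_ge) auto
  have "B \<ge> 0"
    using B[of 0] K nonneg[of T0] by auto
  have geometric: "\<mu> (T0 + s + j * K) \<le> \<epsilon> / 2 + B / 2 ^ j" if "s < K" for s j
  proof (induction j)
    case 0
    then show ?case using B[OF that] \<open>\<epsilon> > 0\<close> by simp
  next
    case (Suc j)
    have "\<mu> (T0 + s + Suc j * K) \<le> \<mu> (T0 + s + j * K) / 2 + g (T0 + s + j * K)"
      using step[of "T0 + s + j * K"] by (simp add: algebra_simps)
    also have "\<dots> \<le> (\<epsilon> / 2 + B / 2 ^ j) / 2 + \<epsilon> / 4"
      using Suc T0[of "T0 + s + j * K"] by (auto intro!: add_mono divide_right_mono)
    also have "\<dots> = \<epsilon> / 2 + B / 2 ^ Suc j"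
      by (simp add: field_simps)
    finally show ?case .
  qed
  obtain J where J: "\<And>j. j \<ge> J \<Longrightarrow> B / 2 ^ j < \<epsilon> / 2"
    using LIMSEQ_D[OF LIMSEQ_divide_realpow_zero[of 2 B], of "\<epsilon> / 2"] \<open>\<epsilon> > 0\<close> \<open>B \<ge> 0\<close>
    by auto
  show "\<exists>N. \<forall>t\<ge>N. norm (\<mu> t - 0) < \<epsilon>"
  proof (intro exI allI impI)
    fix t
    assume t: "t \<ge> T0 + J * K"
    define s j where "s = (t - T0) mod K" and "j = (t - T0) div K"
    have "t = T0 + s + j * K"
      using t by (simp add: s_def j_def)
    then have "\<mu> t \<le> \<epsilon> / 2 + B / 2 ^ j"
      using geometric[of s j] K by (simp add: s_def)
    moreover have "J \<le> j"
      using t K by (simp add: j_def less_eq_div_iff_mult_less_eq)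
    ultimately have "\<mu> t < \<epsilon>"
      using J[of j] by linarith
    then show "norm (\<mu> t - 0) < \<epsilon>"
      using nonneg[of t] by simp
  qed
qed

lemma linear_recurrence_deviation_le:
  fixes A :: "complex mat"
  assumes A: "A \<in> carrier_mat n n"
    and E: "\<And>t. E t \<in> carrier_vec n" and F: "\<And>t. F t \<in> carrier_vec n"
    and rec: "\<And>t. E (Suc t) = A *\<^sub>v E t + F t"
    and D: "\<And>k v. v \<in> carrier_vec n \<Longrightarrow> vec_norm1 (A ^\<^sub>m k *\<^sub>v v) \<le> D * vec_norm1 v"
  shows "vec_norm1 (E (t + k) - A ^\<^sub>m k *\<^sub>v E t) \<le> D * (\<Sum>s<k. vec_norm1 (F (t + s)))"
proof (induction k arbitrary: t)
  case 0
  have "E (t + 0) - A ^\<^sub>m 0 *\<^sub>v E t = 0\<^sub>v n"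
    using E[of t] A by simp
  then show ?case
    by (simp only:) (simp add: vec_norm1_def)
next
  case (Suc k)
  have Ak: "A ^\<^sub>m k \<in> carrier_mat n n"
    using A by simp
  have split: "E (t + Suc k) - A ^\<^sub>m Suc k *\<^sub>v E t
      = (E (Suc t + k) - A ^\<^sub>m k *\<^sub>v E (Suc t)) + A ^\<^sub>m k *\<^sub>v F t"
  proof -
    have power: "A ^\<^sub>m Suc k *\<^sub>v E t = A ^\<^sub>m k *\<^sub>v (A *\<^sub>v E t)"
      using A E[of t] Ak by (simp add: assoc_mult_mat_vec[where n\<^sub>1=n and n\<^sub>2=n and n\<^sub>3=n])
    have step: "A ^\<^sub>m k *\<^sub>v E (Suc t) = A ^\<^sub>m k *\<^sub>v (A *\<^sub>v E t) + A ^\<^sub>m k *\<^sub>v F t"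
      unfolding rec using A E[of t] F[of t] Ak
      by (simp add: mult_add_distrib_mat_vec[where nr=n and nc=n])
    show ?thesis
      unfolding power step using A Ak E F by (intro eq_vecI) (auto simp: algebra_simps)
  qed
  have "vec_norm1 (E (t + Suc k) - A ^\<^sub>m Suc k *\<^sub>v E t)
      \<le> vec_norm1 (E (Suc t + k) - A ^\<^sub>m k *\<^sub>v E (Suc t)) + vec_norm1 (A ^\<^sub>m k *\<^sub>v F t)"
    unfolding split using E F Ak by (intro vec_norm1_add_le) simp
  also have "\<dots> \<le> D * (\<Sum>s<k. vec_norm1 (F (Suc t + s))) + D * vec_norm1 (F t)"
    using Suc[of "Suc t"] D[OF F[of t], of k] by linarith
  also have "\<dots> = D * (\<Sum>s<Suc k. vec_norm1 (F (t + s)))"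
    unfolding sum.lessThan_Suc_shift by (simp add: algebra_simps del: sum.lessThan_Suc)
  finally show ?case .
qed

lemma spectral_radius_less_1_recurrence_tendsto_zero:
  fixes A :: "complex mat"
  assumes A: "A \<in> carrier_mat n n" and n: "n > 0" and sr: "spectral_radius A < 1"
    and E: "\<And>t. E t \<in> carrier_vec n" and F: "\<And>t. F t \<in> carrier_vec n"
    and rec: "\<And>t. E (Suc t) = A *\<^sub>v E t + F t"
    and F_lim: "(\<lambda>t. vec_norm1 (F t)) \<longlonglongrightarrow> 0"
  shows "(\<lambda>t. vec_norm1 (E t)) \<longlonglongrightarrow> 0"
proof -
  obtain c r where c: "0 \<le> c" and r: "0 < r" "r < 1"
    and decay: "\<And>k i j. i < n \<Longrightarrow> j < n \<Longrightarrow> cmod ((A ^\<^sub>m k) $$ (i, j)) \<le> c * r ^ k"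
    using spectral_radius_less_1_power_decay[OF A n sr] by blast
  have bounded: "cmod ((A ^\<^sub>m k) $$ (i, j)) \<le> c" if "i < n" "j < n" for k i j
    using decay[OF that, of k] mult_left_mono[OF power_le_one[of r k] c] r by simp
  define D where "D = real n * c"
  have D: "vec_norm1 (A ^\<^sub>m k *\<^sub>v v) \<le> D * vec_norm1 v" if "v \<in> carrier_vec n" for k v
    unfolding D_def using A that bounded by (intro vec_norm1_mult_mat_vec_le) auto
  have "(\<lambda>k. real n * (c * r ^ k)) \<longlonglongrightarrow> real n * (c * 0)"
    using r by (intro tendsto_mult tendsto_const LIMSEQ_realpow_zero) auto
  from LIMSEQ_D[OF this, of "1 / 2"]
  obtain K0 where K0: "\<And>k. k \<ge> K0 \<Longrightarrow> \<bar>real n * (c * r ^ k)\<bar> < 1 / 2"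
    by auto
  define K where "K = Suc K0"
  have K: "K > 0" "real n * (c * r ^ K) \<le> 1 / 2"
    using K0[of K] by (auto simp: K_def)
  define g where "g t = D * (\<Sum>s<K. vec_norm1 (F (t + s)))" for t
  have step: "vec_norm1 (E (t + K)) \<le> vec_norm1 (E t) / 2 + g t" for t
  proof -
    have "E (t + K) = A ^\<^sub>m K *\<^sub>v E t + (E (t + K) - A ^\<^sub>m K *\<^sub>v E t)"
      using A E by (intro eq_vecI) auto
    then have "vec_norm1 (E (t + K))
        \<le> vec_norm1 (A ^\<^sub>m K *\<^sub>v E t) + vec_norm1 (E (t + K) - A ^\<^sub>m K *\<^sub>v E t)"
      using vec_norm1_add_le[of "E (t + K) - A ^\<^sub>m K *\<^sub>v E t" "A ^\<^sub>m K *\<^sub>v E t"] E A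
      by simp
    moreover have "vec_norm1 (A ^\<^sub>m K *\<^sub>v E t) \<le> real n * (c * r ^ K) * vec_norm1 (E t)"
      using A E decay by (intro vec_norm1_mult_mat_vec_le) auto
    moreover have "real n * (c * r ^ K) * vec_norm1 (E t) \<le> vec_norm1 (E t) / 2"
      using K(2) vec_norm1_nonneg[of "E t"] mult_right_mono by fastforce
    ultimately show ?thesis
      using linear_recurrence_deviation_le[where E = E and F = F, OF A E F rec D, of t K]
      by (simp add: g_def)
  qed
  have "g \<longlonglongrightarrow> D * (\<Sum>s<K. 0)"
    unfolding g_def using F_lim
    by (intro tendsto_mult tendsto_const tendsto_sum) (rule LIMSEQ_ignore_initial_segment)
  then show ?thesis
    using tendsto_zero_of_contraction_after_steps[where \<mu> = "\<lambda>t. vec_norm1 (E t)",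
        OF vec_norm1_nonneg K(1) step]
    by simp
qed

lemma eigenvalues_less_1_recurrence_tendsto_zero:
  fixes M :: "'n::finite \<Rightarrow> 'n \<Rightarrow> real" and e f :: "nat \<Rightarrow> 'n \<Rightarrow> real"
  assumes stable: "\<And>\<mu> (w :: 'n \<Rightarrow> complex). \<exists>j. w j \<noteq> 0 \<Longrightarrow>
        (\<And>i. (\<Sum>j\<in>UNIV. complex_of_real (M i j) * w j) = \<mu> * w i) \<Longrightarrow> cmod \<mu> < 1"
    and rec: "\<And>t i. e (Suc t) i = (\<Sum>j\<in>UNIV. M i j * e t j) + f t i"
    and f_lim: "\<And>i. (\<lambda>t. f t i) \<longlonglongrightarrow> 0"
  shows "(\<lambda>t. e t i) \<longlonglongrightarrow> 0"
proof -
  define n where "n = CARD('n)"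
  have n: "n > 0"
    by (simp add: n_def)
  obtain \<iota> where \<iota>: "bij_betw \<iota> {..<n} (UNIV :: 'n set)"
    using ex_bij_betw_nat_finite[OF finite_class.finite_UNIV] unfolding n_def atLeast0LessThan by blast
  define \<kappa> where "\<kappa> = inv_into {..<n} \<iota>"
  have \<kappa>: "\<kappa> i < n" "\<iota> (\<kappa> i) = i" for i
    using bij_betwE[OF bij_betw_inv_into[OF \<iota>]] bij_betw_inv_into_right[OF \<iota>]
    unfolding \<kappa>_def by auto
  have \<kappa>_\<iota>: "\<kappa> (\<iota> k) = k" if "k < n" for k
    using \<iota> that unfolding \<kappa>_def by (simp add: bij_betw_inv_into_left)
  have reindex: "(\<Sum>k<n. \<phi> (\<iota> k)) = (\<Sum>j\<in>UNIV. \<phi> j)" for \<phi> :: "'n \<Rightarrow> 'b::comm_monoid_add"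
    by (rule sum.reindex_bij_betw[OF \<iota>])
  define A where "A = Matrix.mat n n (\<lambda>(k, l). complex_of_real (M (\<iota> k) (\<iota> l)))"
  have A: "A \<in> carrier_mat n n"
    by (simp add: A_def)
  have A_mult: "vec_index (A *\<^sub>v v) k = (\<Sum>j\<in>UNIV. complex_of_real (M (\<iota> k) j) * vec_index v (\<kappa> j))"
    if "v \<in> carrier_vec n" "k < n" for v k
    using that reindex[of "\<lambda>j. complex_of_real (M (\<iota> k) j) * vec_index v (\<kappa> j)"]
    by (simp add: A_def scalar_prod_def atLeast0LessThan \<kappa>_\<iota>)
  have "spectral_radius A < 1"
  proof -
    obtain \<mu> where \<mu>: "\<mu> \<in> spectrum A" "spectral_radius A = cmod \<mu>"
      using spectral_radius_mem_max(1)[OF A n] by auto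
    then obtain v where v: "v \<in> carrier_vec n" "v \<noteq> 0\<^sub>v n" "A *\<^sub>v v = \<mu> \<cdot>\<^sub>v v"
      using A unfolding spectrum_def eigenvalue_def eigenvector_def by auto
    define w where "w j = vec_index v (\<kappa> j)" for j
    have "\<exists>j. w j \<noteq> 0"
    proof (rule ccontr)
      assume "\<nexists>j. w j \<noteq> 0"
      then have "vec_index v k = 0" if "k < n" for k
        using that w_def[of "\<iota> k"] \<kappa>_\<iota>[OF that] by simp
      then show False
        using v(1,2) by auto
    qed
    moreover have "(\<Sum>j\<in>UNIV. complex_of_real (M i j) * w j) = \<mu> * w i" for i
      using A_mult[OF v(1) \<kappa>(1), of i] arg_cong[OF v(3), of "\<lambda>u. vec_index u (\<kappa> i)"] v(1) \<kappa>
      by (simp add: w_def)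
    ultimately show ?thesis
      using stable \<mu>(2) by simp
  qed
  define lift where "lift u = Matrix.vec n (\<lambda>k. complex_of_real (u (\<iota> k)))" for u :: "'n \<Rightarrow> real"
  have lift: "lift u \<in> carrier_vec n" for u
    by (simp add: lift_def)
  have norm_lift: "vec_norm1 (lift u) = (\<Sum>j\<in>UNIV. \<bar>u j\<bar>)" for u
    using reindex[of "\<lambda>j. \<bar>u j\<bar>"] by (simp add: vec_norm1_def lift_def)
  have "lift (e (Suc t)) = A *\<^sub>v lift (e t) + lift (f t)" for t
    using A_mult[OF lift] by (intro eq_vecI) (auto simp: lift_def \<kappa> rec)
  moreover have "(\<lambda>t. vec_norm1 (lift (f t))) \<longlonglongrightarrow> 0"
    unfolding norm_lift by (intro tendsto_null_sum tendsto_rabs_zero f_lim)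
  ultimately have lim: "(\<lambda>t. vec_norm1 (lift (e t))) \<longlonglongrightarrow> 0"
    by (rule spectral_radius_less_1_recurrence_tendsto_zero[OF A n \<open>spectral_radius A < 1\<close> lift lift])
  have "norm (e t i) \<le> vec_norm1 (lift (e t))" for t
    unfolding norm_lift real_norm_def by (rule member_le_sum) auto
  then show ?thesis
    by (intro Lim_null_comparison[OF always_eventually lim]) simp
qed

lemma eigenvalues_less_1_recurrence_tendsto_zero_vec:
  fixes M :: "'n::finite \<Rightarrow> 'n \<Rightarrow> real" and e f :: "nat \<Rightarrow> 'n \<Rightarrow> real ^ 'm"
  assumes stable: "\<And>\<mu> (w :: 'n \<Rightarrow> complex). \<exists>j. w j \<noteq> 0 \<Longrightarrow>
        (\<And>i. (\<Sum>j\<in>UNIV. complex_of_real (M i j) * w j) = \<mu> * w i) \<Longrightarrow> cmod \<mu> < 1"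
    and rec: "\<And>t i. e (Suc t) i = (\<Sum>j\<in>UNIV. M i j *\<^sub>R e t j) + f t i"
    and f_lim: "\<And>i. (\<lambda>t. f t i) \<longlonglongrightarrow> 0"
  shows "(\<lambda>t. e t i) \<longlonglongrightarrow> 0"
proof (rule vec_tendstoI)
  fix k
  have "(\<lambda>t. e t i $ k) \<longlonglongrightarrow> 0"
  proof (rule eigenvalues_less_1_recurrence_tendsto_zero[where e = "\<lambda>t j. e t j $ k" and f = "\<lambda>t j. f t j $ k",
        OF stable])
    show "e (Suc t) j $ k = (\<Sum>l\<in>UNIV. M j l * e t l $ k) + f t j $ k" for t j
      by (simp add: rec)
    show "(\<lambda>t. f t j $ k) \<longlonglongrightarrow> 0" for j
      using tendsto_vec_nth[where i = k, OF f_lim] by simp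
  qed
  then show "(\<lambda>t. e t i $ k) \<longlonglongrightarrow> 0 $ k"
    by simp
qed

definition laplacian_action :: "('n::finite \<Rightarrow> 'n \<Rightarrow> real) \<Rightarrow> ('n \<Rightarrow> 'v::real_vector) \<Rightarrow> 'n \<Rightarrow> 'v"
  where "laplacian_action a w i = (\<Sum>j\<in>UNIV. a i j *\<^sub>R (w i - w j))"

lemma laplacian_action_diff_const: "laplacian_action a (\<lambda>i. w i - c) = laplacian_action a w"
  by (simp add: laplacian_action_def fun_eq_iff)

lemma laplacian_mult_eq_action:
  fixes w :: "'n::finite \<Rightarrow> 'v::real_vector"
  assumes no_self: "a i i = 0"
  shows "(\<Sum>j\<in>UNIV. laplacian a $ i $ j *\<^sub>R w j) = laplacian_action a w i"
proof -
  have "laplacian a $ i $ j *\<^sub>R w j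
      = (if j = i then (\<Sum>k\<in>UNIV. a i k) *\<^sub>R w i else 0) - a i j *\<^sub>R w j" for j
    using no_self by (auto simp: laplacian_def)
  then have "(\<Sum>j\<in>UNIV. laplacian a $ i $ j *\<^sub>R w j)
      = (\<Sum>k\<in>UNIV. a i k) *\<^sub>R w i - (\<Sum>j\<in>UNIV. a i j *\<^sub>R w j)"
    by (simp add: sum_subtractf)
  then show ?thesis
    by (simp add: laplacian_action_def scaleR_diff_right sum_subtractf scaleR_sum_left)
qed

lemma sum_neighbors_eq_laplacian_action:
  assumes nonneg: "\<And>j. a i j \<ge> 0"
  shows "(\<Sum>j\<in>neighbors a i. a i j *\<^sub>R (w j - w i)) = - laplacian_action a w i"
proof -
  have "(\<Sum>j\<in>neighbors a i. a i j *\<^sub>R (w j - w i)) = (\<Sum>j\<in>UNIV. a i j *\<^sub>R (w j - w i))"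
    using nonneg by (intro sum.mono_neutral_left) (auto simp: neighbors_def order_less_le)
  then show ?thesis
    by (simp add: laplacian_action_def sum_negf[symmetric] scaleR_diff_right)
qed

lemma has_spanning_tree_imp_root:
  assumes "has_spanning_tree a"
  obtains r where "\<And>i. (r, i) \<in> (graph_edges a)\<^sup>*"
  using assms rtrancl_mono unfolding has_spanning_tree_def by blast

lemma laplacian_action_const_eq_zero:
  fixes v :: "'n::finite \<Rightarrow> real"
  assumes nonneg: "\<And>i j. a i j \<ge> 0" and const: "\<And>i. laplacian_action a v i = d"
  shows "d = 0"
proof -
  have "Min (range v) \<in> range v" "Max (range v) \<in> range v"
    by (intro Min_in Max_in; simp)+
  then obtain imin imax where "v imin = Min (range v)" "v imax = Max (range v)"
    by (metis rangeE)
  then have "v imin \<le> v j" "v j \<le> v imax" for j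
    by simp_all
  then have "laplacian_action a v imin \<le> 0" "laplacian_action a v imax \<ge> 0"
    unfolding laplacian_action_def real_scaleR_def using nonneg
    by (intro sum_nonpos sum_nonneg mult_nonneg_nonpos mult_nonneg_nonneg; simp)+
  then show ?thesis
    using const by (metis order_antisym)
qed

lemma harmonic_le_root:
  fixes v :: "'n::finite \<Rightarrow> real"
  assumes nonneg: "\<And>i j. a i j \<ge> 0" and harmonic: "\<And>i. laplacian_action a v i = 0"
    and root: "\<And>i. (r, i) \<in> (graph_edges a)\<^sup>*"
  shows "v i \<le> v r"
proof -
  define M where "M = Max (range v)"
  have le_M: "v j \<le> M" for j
    unfolding M_def by (intro Max_ge) auto
  have max_spreads: "v j = M" if "v k = M" and "(j, k) \<in> graph_edges a" for j k
  proof -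
    have "(\<Sum>l\<in>UNIV. a k l * (v k - v l)) = 0"
      using harmonic[of k] by (simp add: laplacian_action_def)
    moreover have "\<forall>l\<in>UNIV. a k l * (v k - v l) \<ge> 0"
      using that(1) le_M nonneg by auto
    ultimately have "a k j * (v k - v j) = 0"
      using sum_nonneg_eq_0_iff[of UNIV "\<lambda>l. a k l * (v k - v l)"] by simp
    then show ?thesis
      using that by (simp add: graph_edges_def)
  qed
  have max_reaches_root: "v k = M \<longrightarrow> v r = M" if "(r, k) \<in> (graph_edges a)\<^sup>*" for k
    using that
  proof (induction rule: rtrancl_induct)
    case (step j k)
    then show ?case
      using max_spreads[of k j] by blast
  qed simp
  have "M \<in> range v"
    unfolding M_def by (intro Max_in) auto
  then obtain k where "v k = M"
    by (metis rangeE)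
  then have "v r = M"
    using max_reaches_root root by blast
  then show ?thesis
    using le_M[of i] by simp
qed

lemma laplacian_action_const_imp_eq_root_real:
  fixes v :: "'n::finite \<Rightarrow> real"
  assumes nonneg: "\<And>i j. a i j \<ge> 0" and const: "\<And>i. laplacian_action a v i = d"
    and root: "\<And>i. (r, i) \<in> (graph_edges a)\<^sup>*"
  shows "v i = v r"
proof -
  have harmonic: "laplacian_action a v i = 0" for i
    using const laplacian_action_const_eq_zero[OF nonneg const] by simp
  moreover have "laplacian_action a (\<lambda>i. - v i) i = - laplacian_action a v i" for i
    unfolding laplacian_action_def by (simp add: sum_negf[symmetric] algebra_simps)
  ultimately have "- v i \<le> - v r"
    by (intro harmonic_le_root[OF nonneg _ root]) simp
  moreover have "v i \<le> v r"
    by (rule harmonic_le_root[OF nonneg harmonic root])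
  ultimately show ?thesis
    by simp
qed

lemma laplacian_action_const_imp_eq_root:
  fixes w :: "'n::finite \<Rightarrow> complex"
  assumes nonneg: "\<And>i j. a i j \<ge> 0" and const: "\<And>i. laplacian_action a w i = d"
    and root: "\<And>i. (r, i) \<in> (graph_edges a)\<^sup>*"
  shows "w i = w r"
proof -
  have Re: "laplacian_action a (\<lambda>i. Re (w i)) i = Re d"
    and Im: "laplacian_action a (\<lambda>i. Im (w i)) i = Im d" for i
    using arg_cong[OF const[of i], of Re] arg_cong[OF const[of i], of Im]
    by (simp_all add: laplacian_action_def scaleR_conv_of_real)
  have "Re (w i) = Re (w r)"
    by (rule laplacian_action_const_imp_eq_root_real[OF nonneg Re root])
  moreover have "Im (w i) = Im (w r)"
    by (rule laplacian_action_const_imp_eq_root_real[OF nonneg Im root])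
  ultimately show ?thesis
    by (simp add: complex_eq_iff)
qed

text \<open>The matrix (I - 1 e_r^T)(I - h L), which propagates the disagreements x_i - x_r.\<close>
definition disagreement_matrix :: "('n::finite \<Rightarrow> 'n \<Rightarrow> real) \<Rightarrow> real \<Rightarrow> 'n \<Rightarrow> 'n \<Rightarrow> 'n \<Rightarrow> real"
  where "disagreement_matrix a h r i j =
    (if j = i then 1 else 0) - (if j = r then 1 else 0) - h * (laplacian a $ i $ j - laplacian a $ r $ j)"

lemma disagreement_matrix_action:
  fixes w :: "'n::finite \<Rightarrow> 'v::real_vector"
  assumes no_self: "\<And>i. a i i = 0"
  shows "(\<Sum>j\<in>UNIV. disagreement_matrix a h r i j *\<^sub>R w j)
    = (w i - w r) - h *\<^sub>R (laplacian_action a w i - laplacian_action a w r)"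
proof -
  have "disagreement_matrix a h r i j *\<^sub>R w j
      = ((if j = i then w i else 0) - (if j = r then w r else 0))
        - h *\<^sub>R (laplacian a $ i $ j *\<^sub>R w j - laplacian a $ r $ j *\<^sub>R w j)" for j
    by (simp add: disagreement_matrix_def algebra_simps)
  then have "(\<Sum>j\<in>UNIV. disagreement_matrix a h r i j *\<^sub>R w j)
      = (w i - w r) - h *\<^sub>R ((\<Sum>j\<in>UNIV. laplacian a $ i $ j *\<^sub>R w j)
          - (\<Sum>j\<in>UNIV. laplacian a $ r $ j *\<^sub>R w j))"
    by (simp add: sum_subtractf scaleR_right_diff_distrib scaleR_sum_right)
  then show ?thesis
    by (simp add: laplacian_mult_eq_action no_self)
qed

lemma cmod_one_minus_lt_1:
  assumes h_pos: "0 < h" and nonzero: "lam \<noteq> 0" and h_bound: "h < 2 * Re lam / (cmod lam)\<^sup>2"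
  shows "cmod (1 - complex_of_real h * lam) < 1"
proof -
  have "h * (cmod lam)\<^sup>2 < 2 * Re lam"
    using h_bound nonzero by (simp add: pos_less_divide_eq)
  have "(cmod (1 - complex_of_real h * lam))\<^sup>2 = 1 - 2 * h * Re lam + h * (h * (cmod lam)\<^sup>2)"
    unfolding cmod_power2 by (simp add: power2_eq_square algebra_simps)
  also have "\<dots> < 1"
    using \<open>h * (cmod lam)\<^sup>2 < 2 * Re lam\<close> h_pos by (simp add: algebra_simps)
  finally show ?thesis
    by (simp add: power_less_one_iff abs_square_less_1)
qed

lemma cmat_eigenvalue_laplacianI:
  fixes w :: "'n::finite \<Rightarrow> complex"
  assumes no_self: "\<And>i. a i i = 0" and eigen: "\<And>i. laplacian_action a w i = lam * w i"
    and nonzero: "w j \<noteq> 0"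
  shows "cmat_eigenvalue (laplacian a) lam"
  unfolding cmat_eigenvalue_def
proof (intro exI conjI)
  show "(\<chi> i. w i) \<noteq> 0"
    using nonzero by (metis vec_lambda_beta zero_index)
  show "(\<chi> i j. complex_of_real (laplacian a $ i $ j)) *v (\<chi> i. w i) = lam *s (\<chi> i. w i)"
    using laplacian_mult_eq_action[of a _ w, OF no_self] eigen
    by (simp add: vec_eq_iff matrix_vector_mult_def vector_scalar_mult_def scaleR_conv_of_real)
qed

lemma shifted_laplacian_eigenvector:
  fixes w :: "'n::finite \<Rightarrow> complex"
  assumes h: "h \<noteq> 0" and \<mu>: "\<mu> \<noteq> 1"
    and eq: "\<And>i. w i - complex_of_real h * laplacian_action a w i - c = \<mu> * w i"
  shows "laplacian_action a (\<lambda>i. w i - c / (1 - \<mu>)) i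
    = (1 - \<mu>) / complex_of_real h * (w i - c / (1 - \<mu>))"
proof -
  have "complex_of_real h * laplacian_action a w i = (1 - \<mu>) * w i - c"
    using eq[of i] by (simp add: algebra_simps)
  then have "laplacian_action a w i = ((1 - \<mu>) * w i - c) / complex_of_real h"
    using h by (simp add: field_simps)
  also have "\<dots> = (1 - \<mu>) * (w i - c / (1 - \<mu>)) / complex_of_real h"
    using \<mu> by (simp add: right_diff_distrib)
  finally show ?thesis
    by (simp add: laplacian_action_diff_const)
qed

lemma disagreement_matrix_eigenvalue_lt_1:
  fixes w :: "'n::finite \<Rightarrow> complex"
  assumes nonneg: "\<And>i j. a i j \<ge> 0" and no_self: "\<And>i. a i i = 0"
    and root: "\<And>i. (r, i) \<in> (graph_edges a)\<^sup>*"
    and h_pos: "0 < h"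
    and h_bound: "\<And>lam. cmat_eigenvalue (laplacian a) lam \<Longrightarrow> lam \<noteq> 0 \<Longrightarrow>
        h < 2 * Re lam / (cmod lam)\<^sup>2"
    and nonzero: "\<exists>j. w j \<noteq> 0"
    and eigen: "\<And>i. (\<Sum>j\<in>UNIV. complex_of_real (disagreement_matrix a h r i j) * w j) = \<mu> * w i"
  shows "cmod \<mu> < 1"
proof -
  define c where "c = w r - complex_of_real h * laplacian_action a w r"
  have eq: "w i - complex_of_real h * laplacian_action a w i - c = \<mu> * w i" for i
    using eigen[of i] disagreement_matrix_action[where a = a and h = h and r = r and w = w and i = i,
        OF no_self]
    by (simp add: c_def scaleR_conv_of_real algebra_simps)
  show ?thesis
  proof (cases "\<forall>i. w i = w r")
    case True
    then have "w i - w j = 0" for i j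
      by (metis diff_self)
    then have "laplacian_action a w i = 0" for i
      by (simp add: laplacian_action_def)
    then have "\<mu> * w i = 0" for i
      using eq[of i] \<open>w i - w r = 0\<close> by (simp add: c_def)
    moreover obtain j where "w j \<noteq> 0"
      using nonzero by blast
    ultimately have "\<mu> = 0"
      by (metis mult_eq_0_iff)
    then show ?thesis
      by simp
  next
    case False
    then obtain j where j: "w j \<noteq> w r"
      by auto
    have "\<mu> \<noteq> 1"
    proof
      assume "\<mu> = 1"
      then have "laplacian_action a w i = - c / complex_of_real h" for i
        using eq[of i] h_pos by (simp add: field_simps eq_neg_iff_add_eq_0)
      then have "w j = w r"
        by (rule laplacian_action_const_imp_eq_root[OF nonneg _ root])
      with j show False
        by simp
    qed
    define lam where "lam = (1 - \<mu>) / complex_of_real h"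
    define w' where "w' = (\<lambda>i. w i - c / (1 - \<mu>))"
    have "w' j \<noteq> w' r"
      using j by (simp add: w'_def)
    then obtain k where k: "w' k \<noteq> 0"
      by (cases "w' j = 0") auto
    have "laplacian_action a w' i = lam * w' i" for i
      using shifted_laplacian_eigenvector[OF _ \<open>\<mu> \<noteq> 1\<close> eq] h_pos by (simp add: w'_def lam_def)
    then have "cmat_eigenvalue (laplacian a) lam"
      using k by (rule cmat_eigenvalue_laplacianI[OF no_self])
    moreover have "lam \<noteq> 0"
      using \<open>\<mu> \<noteq> 1\<close> h_pos by (simp add: lam_def)
    moreover have "\<mu> = 1 - complex_of_real h * lam"
      using h_pos by (simp add: lam_def)
    ultimately show ?thesis
      using cmod_one_minus_lt_1[OF h_pos] h_bound by simp
  qed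
qed

theorem proposition4:
  fixes a :: "'n::finite \<Rightarrow> 'n \<Rightarrow> real"
    and h :: real
    and g :: "'n \<Rightarrow> real^'m \<Rightarrow> real"
    and X :: "'n \<Rightarrow> (real^'m) set"
    and sg :: "'n \<Rightarrow> real^'m \<Rightarrow> real^'m"
    and \<alpha> \<beta> :: "nat \<Rightarrow> real"
    and x y nabla \<xi> varphi \<phi> u :: "nat \<Rightarrow> 'n \<Rightarrow> real^'m"
  assumes nonneg: "\<And>i j. a i j \<ge> 0"
    and no_self: "\<And>i. a i i = 0"
    and tree: "has_spanning_tree a"
    and g_convex: "\<And>i. convex_on UNIV (g i)"
    and g_cont: "\<And>i. continuous_on UNIV (g i)"
    and X_closed: "\<And>i. closed (X i)"
    and X_convex: "\<And>i. convex (X i)"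
    and X_nonempty: "\<And>i. X i \<noteq> {}"
    and sg_subgrad: "\<And>i z. is_subgradient (gplus (g i)) z (sg i z)"
    and h_pos: "0 < h"
    and h_bound: "\<And>lam. cmat_eigenvalue (laplacian a) lam \<Longrightarrow> lam \<noteq> 0 \<Longrightarrow>
                    h < 2 * Re lam / (cmod lam)\<^sup>2"
    and y_def: "\<And>t i. y t i = x t i + h *\<^sub>R (\<Sum>j\<in>neighbors a i. a i j *\<^sub>R (x t j - x t i))"
    and nabla_def: "\<And>t i. nabla t i = \<beta> t *\<^sub>R sg i (y t i)"
    and xi_def: "\<And>t i. \<xi> t i = y t i - nabla t i"
    and varphi_def: "\<And>t i. varphi t i = \<alpha> t *\<^sub>R (\<xi> t i - closest_point (X i) (\<xi> t i))"
    and phi_def: "\<And>t i. \<phi> t i = - nabla t i - varphi t i"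
    and u_def: "\<And>t i. u t i = h *\<^sub>R (\<Sum>j\<in>neighbors a i. a i j *\<^sub>R (x t j - x t i)) + \<phi> t i"
    and dyn: "\<And>t i. x (Suc t) i = x t i + u t i"
    and phi_lim: "\<And>i. (\<lambda>t. \<phi> t i) \<longlonglongrightarrow> 0"
  shows "\<forall>i j. (\<lambda>t. norm (x t i - x t j)) \<longlonglongrightarrow> 0"
proof -
  obtain r where root: "\<And>i. (r, i) \<in> (graph_edges a)\<^sup>*"
    using has_spanning_tree_imp_root[OF tree] by blast
  define e where "e t i = x t i - x t r" for t i
  have x_step: "x (Suc t) i = x t i - h *\<^sub>R laplacian_action a (x t) i + \<phi> t i" for t i
    using sum_neighbors_eq_laplacian_action[where a = a and i = i and w = "x t", OF nonneg]
    by (simp add: dyn u_def)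
  have e_step: "e (Suc t) i
      = (\<Sum>j\<in>UNIV. disagreement_matrix a h r i j *\<^sub>R e t j) + (\<phi> t i - \<phi> t r)" for t i
    unfolding disagreement_matrix_action[OF no_self] e_def laplacian_action_diff_const x_step
    by (simp add: algebra_simps)
  have \<phi>_diff_lim: "(\<lambda>t. \<phi> t j - \<phi> t r) \<longlonglongrightarrow> 0" for j
    using tendsto_diff[OF phi_lim phi_lim] by simp
  have e_lim: "(\<lambda>t. e t i) \<longlonglongrightarrow> 0" for i
    using disagreement_matrix_eigenvalue_lt_1[OF nonneg no_self root h_pos h_bound] e_step \<phi>_diff_lim
    by (rule eigenvalues_less_1_recurrence_tendsto_zero_vec)
  show ?thesis
  proof (intro allI)
    fix i j
    have "(\<lambda>t. e t i - e t j) \<longlonglongrightarrow> 0 - 0"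
      by (intro tendsto_diff e_lim)
    then show "(\<lambda>t. norm (x t i - x t j)) \<longlonglongrightarrow> 0"
      by (simp add: e_def tendsto_norm_zero_iff)
  qed
qed

end
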